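(* Let $m\ge1$, let $\Theta$ be a non-degenerate quadratic form of type $\pm1$ on $V=\mathbb{F}_4^{2m}$ with polar symplectic form $\langle\cdot,\cdot\rangle$, and let $\Theta^*=\mathrm{Tr}_{\mathbb{F}_4/\mathbb{F}_2}\circ\Theta$ and $\langle u,v\rangle^*=\mathrm{Tr}_{\mathbb{F}_4/\mathbb{F}_2}(\langle u,v\rangle)$, regarding $V$ as $\mathbb{F}_2^{4m}$. Let $X=\{a\in V:\Theta^*(a)=1\}$. Let $G_1$ be the graph on $X$ with $a\sim b$ iff $a\neq b$ and $\langle a,b\rangle^*=0$ (a copy of $NO^{\pm}(4m,2)$), and $G_2$ the graph on $X$ with $a\sim b$ iff $a\ne b$ and $\Theta(a+b)=\langle a,b\rangle^2$ (a copy of $NO^{\mp}(2m+1,4)$). Let $\lambda\in\mathbb{F}_4\setminus\mathbb{F}_2$ be a root of $x^2+x+1$ and $A=\{a\in\mathbb{F}_4^{2m}:\Theta(a)=\lambda\}$, $B=\{a\in\mathbb{F}_4^{2m}:\Theta(a)=\lambda+1\}$. Then $X=A\cup B$ and the Seidel switching between $G_1$ and $G_2$ is the switching with respect to the sets $A$, $B$; that is, $G_2$ is obtained from $G_1$ by Seidel switching with respect to $A$ (equivalently $B$). Moreover $|A|=|B|=2^{4m-2}\mp2^{2m-2}$, and the subgraphs induced on $A$ and on $B$ are regular of degree $2^{4m-3}\mp2^{2m-2}-1$.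
   Context: For a quadratic form $\Theta$ on $\mathbb{F}_q^{n}$ ($q$ even) the polar form is $f(u,v)=\Theta(u+v)+\Theta(u)+\Theta(v)$. A form on $\mathbb{F}_q^{2m}$ is non-degenerate if $f$ is non-degenerate, of type $+1$ (hyperbolic) if its Witt index is $m$, of type $-1$ (elliptic) if it is $m-1$. Seidel switching of a graph with respect to a vertex subset $Y$ replaces all edges between $Y$ and its complement by non-edges and all such non-edges by edges, leaving the rest unchanged. Signs are read consistently (upper with upper). *)

theory Defs
  imports "HOL-Analysis.Analysis"
begin

text \<open>Polar form of a quadratic form (characteristic 2 convention of the paper).\<close>
definition polar :: "('a::field^'n \<Rightarrow> 'a) \<Rightarrow> 'a^'n \<Rightarrow> 'a^'n \<Rightarrow> 'a" where
  "polar Q u v = Q (u + v) + Q u + Q v"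

definition quadratic_form :: "('a::field^'n \<Rightarrow> 'a) \<Rightarrow> bool" where
  "quadratic_form Q \<longleftrightarrow>
     (\<forall>c x. Q (c *s x) = c^2 * Q x) \<and>
     (\<forall>u v w. polar Q (u + v) w = polar Q u w + polar Q v w) \<and>
     (\<forall>c u v. polar Q (c *s u) v = c * polar Q u v) \<and>
     (\<forall>u v w. polar Q u (v + w) = polar Q u v + polar Q u w) \<and>
     (\<forall>c u v. polar Q u (c *s v) = c * polar Q u v)"

definition nondegenerate :: "('a::field^'n \<Rightarrow> 'a) \<Rightarrow> bool" where
  "nondegenerate Q \<longleftrightarrow> (\<forall>u. (\<forall>v. polar Q u v = 0) \<longrightarrow> u = 0)"

definition witt_index :: "('a::field^'n \<Rightarrow> 'a) \<Rightarrow> nat" where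
  "witt_index Q = Max {vec.dim W | W. vec.subspace W \<and> (\<forall>x\<in>W. Q x = 0)}"

text \<open>Absolute trace from a field with 4 elements to its prime field F_2 = {0,1}.\<close>
definition tr4 :: "'a::field \<Rightarrow> 'a" where
  "tr4 x = x + x^2"

definition seidel_switch :: "('v \<Rightarrow> 'v \<Rightarrow> bool) \<Rightarrow> 'v set \<Rightarrow> 'v \<Rightarrow> 'v \<Rightarrow> bool" where
  "seidel_switch E Y a b = (if (a \<in> Y) \<noteq> (b \<in> Y) then a \<noteq> b \<and> \<not> E a b else E a b)"

end

theory Submission
  imports Defs
begin

(* Over F_4 the trace Tr x = x + x^2 equals 1 exactly on the two roots omega, omega + 1 of
   x^2 + x + 1, so X = A \<union> B.  Since Theta (a + b) = Theta a + Theta b + <a,b> in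
   characteristic 2, the adjacency Theta (a + b) = <a,b>^2 of G2 says Tr <a,b> = Theta a + Theta b,
   whose right-hand side is 0 for a, b on the same side and 1 across; as Tr only takes the values
   0 and 1, G2 is G1 switched with respect to A.

   The level sets of Theta are counted with a maximal totally singular subspace W: outside W^perp
   the form takes all values equally often, while on W^perp it vanishes exactly on W, which is all
   of W^perp in the hyperbolic case and has codimension 2 in it in the elliptic case, where the
   nonzero values are equidistributed by scaling.  For the degrees, fix a with Theta a = c and
   count the b with prescribed Theta b and <a,b>: translations b \<mapsto> b + s a and scalings
   b \<mapsto> s b identify most of these numbers, and the level-set sizes determine the rest. *)

lemma finite_field_pow_card:
  fixes x :: "'a::{field,finite}"
  shows "x ^ CARD('a) = x"
proof (cases "x = 0")
  case False
  have "x * (\<Prod>y\<in>UNIV-{0}. x * y) = x * x ^ (CARD('a) - 1) * \<Prod>(UNIV-{0})"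
    by (simp add: prod.distrib mult_ac)
  also have "x * x ^ (CARD('a) - 1) = x ^ CARD('a)"
    using finite_UNIV_card_ge_0[where ?'a = 'a] by (simp flip: power_Suc)
  also have "(\<Prod>y\<in>UNIV-{0}. x * y) = (\<Prod>y\<in>UNIV-{0}. y)"
    by (rule prod.reindex_bij_witness[of _ "\<lambda>y. y / x" "\<lambda>y. x * y"]) (use False in auto)
  finally show ?thesis
    by simp
qed (use finite_UNIV_card_ge_0[where ?'a = 'a] in auto)

lemma char_2_if_card_4:
  assumes "CARD('a::{field,finite}) = 4"
  shows "(2::'a) = 0"
proof -
  have "(-1::'a) ^ 4 = -1"
    using finite_field_pow_card[of "-1::'a"] assms by simp
  then show ?thesis
    by (simp add: eq_neg_iff_add_eq_0)
qed

lemma card_field_gt_1: "1 < CARD('a::{field,finite})"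
proof -
  have "card {0, 1::'a} \<le> CARD('a)"
    by (rule card_mono) auto
  then show ?thesis
    by simp
qed

lemma bij_betw_span_insert:
  fixes B :: "('a::field^'n) set"
  assumes x: "x \<notin> vec.span B"
  shows "bij_betw (\<lambda>(c, y). c *s x + y) (UNIV \<times> vec.span B) (vec.span (insert x B))"
  unfolding bij_betw_def
proof
  let ?g = "\<lambda>(c, y). c *s x + y"
  show "inj_on ?g (UNIV \<times> vec.span B)"
  proof (rule inj_onI, clarsimp)
    fix c y c' y'
    assume y: "y \<in> vec.span B" "y' \<in> vec.span B" and eq: "c *s x + y = c' *s x + y'"
    have "c = c'"
    proof (rule ccontr)
      assume "c \<noteq> c'"
      have "(c - c') *s x = y' - y"
        using eq by (simp add: algebra_simps vector_sadd_rdistrib vector_ssub_ldistrib)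
      then have "(1 / (c - c')) *s ((c - c') *s x) \<in> vec.span B"
        using y by (metis vec.span_diff vec.span_scale)
      moreover have "(1 / (c - c')) * (c - c') = 1"
        using \<open>c \<noteq> c'\<close> by simp
      ultimately show False
        using x by (simp only: vector_smult_assoc vector_smult_lid)
    qed
    then show "c = c' \<and> y = y'"
      using eq by simp
  qed
  show "?g ` (UNIV \<times> vec.span B) = vec.span (insert x B)"
  proof (intro set_eqI iffI)
    fix z
    assume "z \<in> vec.span (insert x B)"
    then obtain k where "z - k *s x \<in> vec.span B"
      by (auto simp: vec.span_insert)
    then show "z \<in> ?g ` (UNIV \<times> vec.span B)"
      by (intro image_eqI[of _ _ "(k, z - k *s x)"]) auto
  next
    fix z
    assume "z \<in> ?g ` (UNIV \<times> vec.span B)"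
    then obtain c y where "y \<in> vec.span B" "z = c *s x + y"
      by auto
    then show "z \<in> vec.span (insert x B)"
      by (auto simp: vec.span_insert intro!: exI[of _ c])
  qed
qed

lemma card_span_independent:
  fixes B :: "('a::{field,finite}^'n) set"
  assumes "vec.independent B"
  shows "card (vec.span B) = CARD('a) ^ card B"
proof -
  have "finite B"
    using assms vec.finiteI_independent by blast
  then show ?thesis
    using assms
  proof (induction B rule: finite_induct)
    case empty
    then show ?case by simp
  next
    case (insert x B)
    have indep: "vec.independent B" and x: "x \<notin> vec.span B"
      using insert by (auto simp: vec.independent_insert)
    have "card (vec.span (insert x B)) = card ((UNIV :: 'a set) \<times> vec.span B)"
      by (rule bij_betw_same_card[OF bij_betw_span_insert[OF x], symmetric])
    then show ?case
      using insert.IH[OF indep] insert.hyps by (simp add: card_cartesian_product)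
  qed
qed

lemma card_subspace:
  fixes W :: "('a::{field,finite}^'n) set"
  assumes "vec.subspace W"
  shows "card W = CARD('a) ^ vec.dim W"
proof -
  obtain B where B: "B \<subseteq> W" "vec.independent B" "W \<subseteq> vec.span B" "card B = vec.dim W"
    using vec.basis_exists by blast
  then have "vec.span B = W"
    using assms vec.span_minimal by blast
  then show ?thesis
    using card_span_independent[OF B(2)] B(4) by simp
qed

lemma card_eq_sum_card_fibers:
  fixes g :: "'v \<Rightarrow> 'b::finite"
  assumes "finite S"
  shows "card S = (\<Sum>c\<in>UNIV. card {x\<in>S. g x = c})"
proof -
  have "card (\<Union>c. {x\<in>S. g x = c}) = (\<Sum>c\<in>UNIV. card {x\<in>S. g x = c})"
    by (rule card_UN_disjoint) (use assms in auto)
  moreover have "(\<Union>c. {x\<in>S. g x = c}) = S"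
    by auto
  ultimately show ?thesis
    by simp
qed

lemma card_eq_CARD_mult_card_fiber:
  fixes S :: "('a::{field,finite}^'n) set" and \<phi> :: "'a^'n \<Rightarrow> 'a"
  assumes closed: "\<And>x c. x \<in> S \<Longrightarrow> x + c *s u \<in> S"
    and shift: "\<And>x c. x \<in> S \<Longrightarrow> \<phi> (x + c *s u) = \<phi> x + c"
  shows "card S = CARD('a) * card {x\<in>S. \<phi> x = d}"
proof -
  have maps_to: "(\<lambda>x. x + k *s u) ` {x\<in>S. \<phi> x = e} \<subseteq> {x\<in>S. \<phi> x = e'}"
    if "e + k = e'" for e e' k
    using closed shift that by auto
  have cancel: "x + k *s u + (- k) *s u = x" for x and k :: 'a
    by (simp add: add.assoc flip: vector_sadd_rdistrib)
  have fibers_eq: "card {x\<in>S. \<phi> x = e} = card {x\<in>S. \<phi> x = d}" for e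
  proof (rule bij_betw_same_card, rule bij_betw_byWitness[where f' = "\<lambda>x. x + (e - d) *s u"])
    show "\<forall>x\<in>{x\<in>S. \<phi> x = e}. x + (d - e) *s u + (e - d) *s u = x"
      using cancel[of _ "d - e"] by simp
    show "\<forall>x\<in>{x\<in>S. \<phi> x = d}. x + (e - d) *s u + (d - e) *s u = x"
      using cancel[of _ "e - d"] by simp
    show "(\<lambda>x. x + (d - e) *s u) ` {x\<in>S. \<phi> x = e} \<subseteq> {x\<in>S. \<phi> x = d}"
      by (rule maps_to) simp
    show "(\<lambda>x. x + (e - d) *s u) ` {x\<in>S. \<phi> x = d} \<subseteq> {x\<in>S. \<phi> x = e}"
      by (rule maps_to) simp
  qed
  have "card S = (\<Sum>e\<in>UNIV. card {x\<in>S. \<phi> x = e})"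
    by (rule card_eq_sum_card_fibers) simp
  also have "\<dots> = (\<Sum>e\<in>(UNIV::'a set). card {x\<in>S. \<phi> x = d})"
    using fibers_eq by (rule sum.cong[OF refl])
  finally show ?thesis
    by simp
qed

lemma card_eq_if_involution:
  assumes "\<And>x. g (g x) = x" "g ` A \<subseteq> B" "g ` B \<subseteq> A"
  shows "card A = card B"
  by (rule bij_betw_same_card[of g], rule bij_betw_byWitness[where f' = g]) (use assms in auto)

lemma seidel_switch_within:
  assumes "Y \<subseteq> X" and switch: "\<forall>a\<in>X. \<forall>b\<in>X. E' a b \<longleftrightarrow> seidel_switch E Y a b" and "a \<in> Y"
  shows "{b\<in>Y. E' a b} = {b\<in>Y. E a b}"
proof -
  have "E' a b \<longleftrightarrow> E a b" if "b \<in> Y" for b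
  proof -
    have "E' a b \<longleftrightarrow> seidel_switch E Y a b"
      using assms that by blast
    then show ?thesis
      using \<open>a \<in> Y\<close> that unfolding seidel_switch_def by simp
  qed
  then show ?thesis
    by blast
qed

lemma seidel_switch_complement:
  assumes "a \<in> Y \<union> Z" "b \<in> Y \<union> Z" "Y \<inter> Z = {}"
  shows "seidel_switch E Y a b = seidel_switch E Z a b"
  using assms unfolding seidel_switch_def by auto

(* In odd characteristic the axioms of quadratic_form force the form to vanish, so
   characteristic 2 is the only case with content. *)
locale char2_quadratic_space =
  fixes \<Theta> :: "'a::{field,finite}^'n \<Rightarrow> 'a"
  assumes char2: "(2::'a) = 0"
    and quadratic: "quadratic_form \<Theta>"
    and nondegenerate: "nondegenerate \<Theta>"
begin

abbreviation f :: "'a^'n \<Rightarrow> 'a^'n \<Rightarrow> 'a" where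
  "f \<equiv> polar \<Theta>"

lemma add_self_eq_0 [simp]: "(x::'a) + x = 0"
  by (metis char2 mult_2 mult_zero_left)

lemma add_add_self [simp]: "(x::'a) + y + y = x"
  by (simp add: add.assoc)

lemma vec_add_self_eq_0 [simp]: "(v::'a^'n) + v = 0"
  by (simp add: vec_eq_iff char2)

lemma vec_add_add_self [simp]: "(v::'a^'n) + w + w = v"
  by (simp add: add.assoc)

lemma add_eq_iff_add_eq: "(x::'a) + y = z \<longleftrightarrow> y + z = x"
  by (metis add_add_self add.commute)

lemma add_eq_0_iff_eq: "(x::'a) + y = 0 \<longleftrightarrow> x = y"
  by (metis add_add_self add_0)

lemma square_add: "((x::'a) + y)^2 = x^2 + y^2"
  by (simp add: power2_sum char2)

lemma square_eq_iff: "(x::'a)^2 = y^2 \<longleftrightarrow> x = y"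
proof
  assume "x^2 = y^2"
  then have "(x + y)^2 = 0"
    by (simp add: square_add)
  then show "x = y"
    by (metis add_add_self add_0 power_eq_0_iff)
qed simp

lemma ex_square_eq: "\<exists>s::'a. s^2 = c"
proof -
  have "inj (\<lambda>s::'a. s^2)"
    by (rule injI) (simp add: square_eq_iff)
  then have "surj (\<lambda>s::'a. s^2)"
    using finite_UNIV_inj_surj[OF finite] by blast
  then show ?thesis
    by (metis surjD)
qed

lemma Theta_smult: "\<Theta> (c *s x) = c^2 * \<Theta> x"
  using quadratic unfolding quadratic_form_def by blast

lemma Theta_0 [simp]: "\<Theta> 0 = 0"
  using Theta_smult[of 0 0] by simp

lemma Theta_add: "\<Theta> (u + v) = \<Theta> u + \<Theta> v + f u v"
  unfolding polar_def by (metis add_add_self add.commute add.left_commute)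

lemma polar_commute: "f u v = f v u"
  unfolding polar_def by (simp add: ac_simps)

lemma polar_add_left [simp]: "f (u + v) w = f u w + f v w"
  using quadratic unfolding quadratic_form_def by blast

lemma polar_add_right [simp]: "f u (v + w) = f u v + f u w"
  using quadratic unfolding quadratic_form_def by blast

lemma polar_smult_left [simp]: "f (c *s u) v = c * f u v"
  using quadratic unfolding quadratic_form_def by blast

lemma polar_smult_right [simp]: "f u (c *s v) = c * f u v"
  using quadratic unfolding quadratic_form_def by blast

lemma polar_self [simp]: "f u u = 0"
  unfolding polar_def by simp

lemma polar_0_left [simp]: "f 0 v = 0"
  using polar_smult_left[of 0 v v] by simp

lemma Theta_add_eq_polar_square_iff: "\<Theta> (a + b) = (f a b)^2 \<longleftrightarrow> tr4 (f a b) = \<Theta> a + \<Theta> b"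
  unfolding Theta_add tr4_def by (rule add_eq_iff_add_eq)

definition perp :: "('a^'n) set \<Rightarrow> ('a^'n) set" where
  "perp W = {x. \<forall>y\<in>W. f x y = 0}"

definition totally_singular :: "('a^'n) set \<Rightarrow> bool" where
  "totally_singular W \<longleftrightarrow> vec.subspace W \<and> (\<forall>x\<in>W. \<Theta> x = 0)"

lemma subspace_perp: "vec.subspace (perp W)"
  unfolding vec.subspace_def perp_def by simp

lemma totally_singular_subset_perp:
  assumes "totally_singular W"
  shows "W \<subseteq> perp W"
proof
  fix x
  assume x: "x \<in> W"
  have "f x y = 0" if "y \<in> W" for y
    using assms x that vec.subspace_add[of W x y] unfolding totally_singular_def polar_def by simp
  then show "x \<in> perp W"
    unfolding perp_def by blast
qed

lemma notin_perp_UNIV: "x \<noteq> 0 \<Longrightarrow> x \<notin> perp UNIV"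
  using nondegenerate unfolding nondegenerate_def perp_def by blast

lemma card_subspace_eq_card_polar_fiber:
  assumes W: "vec.subspace W" and x: "x \<notin> perp W"
  shows "card W = CARD('a) * card {y\<in>W. f x y = d}"
proof -
  obtain y where y: "y \<in> W" "f x y \<noteq> 0"
    using x unfolding perp_def by blast
  define u where "u = (1 / f x y) *s y"
  have "u \<in> W" "f x u = 1"
    using W y unfolding u_def by (simp_all add: vec.subspace_scale)
  then show ?thesis
    using W by (intro card_eq_CARD_mult_card_fiber[where u = u])
      (simp_all add: vec.subspace_add vec.subspace_scale)
qed

lemma card_mult_card_perp:
  assumes W: "vec.subspace W"
  shows "card W * card (perp W) = CARD('a^'n)"
proof -
  let ?q = "CARD('a)" and ?V = "CARD('a^'n)" and ?P = "perp W"
  have row: "?q * card {x. f y x = 0} = ?V + (if y = 0 then (?q - 1) * ?V else 0)" for y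
  proof (cases "y = 0")
    case True
    then show ?thesis
      using card_field_gt_1[where 'a = 'a] by (simp add: algebra_simps)
  next
    case False
    then show ?thesis
      using card_subspace_eq_card_polar_fiber[of UNIV y 0] notin_perp_UNIV by simp
  qed
  have col: "?q * card {y\<in>W. f y x = 0} = card W + (if x \<in> ?P then (?q - 1) * card W else 0)" for x
  proof (cases "x \<in> ?P")
    case True
    then have "{y\<in>W. f y x = 0} = W"
      unfolding perp_def by (auto simp: polar_commute)
    then show ?thesis
      using True card_field_gt_1[where 'a = 'a] by (simp add: algebra_simps)
  next
    case False
    then show ?thesis
      using card_subspace_eq_card_polar_fiber[OF W False, of 0] by (simp add: polar_commute)
  qed
  \<comment> \<open>count the pairs (y, x) with y \<in> W and f y x = 0 in two ways\<close>
  have "(\<Sum>y\<in>W. card {x. f y x = 0}) = (\<Sum>x\<in>UNIV. card {y\<in>W. f y x = 0})"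
    using sum_multicount_gen[of W UNIV "\<lambda>y x. f y x = 0" "\<lambda>x. card {y\<in>W. f y x = 0}"] by simp
  then have "?q * (\<Sum>y\<in>W. card {x. f y x = 0}) = ?q * (\<Sum>x\<in>UNIV. card {y\<in>W. f y x = 0})"
    by simp
  then have "card W * ?V + (?q - 1) * ?V = ?V * card W + (?q - 1) * card W * card ?P"
    using vec.subspace_0[OF W] by (simp add: sum_distrib_left row col sum.distrib sum.If_cases mult_ac)
  then show ?thesis
    using card_field_gt_1[where 'a = 'a] by simp
qed

lemma obtain_maximal_totally_singular:
  obtains W where "totally_singular W" "vec.dim W = witt_index \<Theta>"
    "\<And>W'. totally_singular W' \<Longrightarrow> vec.dim W' \<le> vec.dim W"
proof -
  define D where "D = {vec.dim W | W. totally_singular W}"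
  have in_D: "d \<in> D \<longleftrightarrow> (\<exists>W. totally_singular W \<and> d = vec.dim W)" for d
    unfolding D_def by blast
  have "D \<subseteq> {..vec.dim (UNIV::('a^'n) set)}"
  proof
    fix d
    assume "d \<in> D"
    then obtain W :: "('a^'n) set" where "d = vec.dim W"
      using in_D by blast
    then show "d \<in> {..vec.dim (UNIV::('a^'n) set)}"
      using vec.dim_subset[of W UNIV] by simp
  qed
  then have fin: "finite D"
    by (rule finite_subset) simp
  have "totally_singular {0}"
    by (simp add: totally_singular_def)
  then have "D \<noteq> {}"
    using in_D by blast
  with fin have "Max D \<in> D"
    by (rule Max_in)
  then obtain W where W: "totally_singular W" "vec.dim W = Max D"
    using in_D by metis
  have "witt_index \<Theta> = Max D"
    unfolding witt_index_def totally_singular_def D_def by (rule refl)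
  moreover have "vec.dim W' \<le> vec.dim W" if "totally_singular W'" for W'
  proof -
    have "vec.dim W' \<in> D"
      using in_D that by blast
    then show ?thesis
      unfolding W(2) by (rule Max_ge[OF fin])
  qed
  ultimately show ?thesis
    using that W by simp
qed

lemma singular_perp_eq_maximal_totally_singular:
  assumes W: "totally_singular W"
    and maximal: "\<And>W'. totally_singular W' \<Longrightarrow> vec.dim W' \<le> vec.dim W"
  shows "{x\<in>perp W. \<Theta> x = 0} = W"
proof
  show "W \<subseteq> {x\<in>perp W. \<Theta> x = 0}"
    using W totally_singular_subset_perp[OF W] unfolding totally_singular_def by blast
next
  show "{x\<in>perp W. \<Theta> x = 0} \<subseteq> W"
  proof
    fix x
    assume "x \<in> {x\<in>perp W. \<Theta> x = 0}"
    then have x: "x \<in> perp W" "\<Theta> x = 0"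
      by auto
    have span_W: "vec.span W = W"
      using W unfolding totally_singular_def by simp
    have singular: "totally_singular (vec.span (insert x W))"
      unfolding totally_singular_def
    proof (intro conjI ballI vec.subspace_span)
      fix z
      assume "z \<in> vec.span (insert x W)"
      then obtain k where "z - k *s x \<in> W"
        using span_W by (auto simp: vec.span_insert)
      then obtain y where "y \<in> W" "z = k *s x + y"
        by (metis add.commute diff_add_cancel)
      moreover have "f x y = 0" if "y \<in> W" for y
        using x(1) that unfolding perp_def by blast
      ultimately show "\<Theta> z = 0"
        using W x(2) unfolding totally_singular_def by (simp add: Theta_add Theta_smult)
    qed
    have "x \<in> vec.span W"
    proof (rule ccontr)
      assume "x \<notin> vec.span W"
      then have "vec.dim (vec.span (insert x W)) = vec.dim W + 1"
        by (simp add: vec.dim_span vec.dim_insert)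
      with maximal[OF singular] show False
        by simp
    qed
    then show "x \<in> W"
      using span_W by simp
  qed
qed

lemma card_outside_perp_translate:
  assumes W: "totally_singular W" and y: "y \<in> W"
  shows "card {x\<in>-perp W. \<Theta> (x + y) = c} = card {x\<in>-perp W. \<Theta> x = c}"
proof (rule card_eq_if_involution[of "\<lambda>x. x + y"])
  let ?P = "perp W"
  have "y \<in> ?P"
    using y totally_singular_subset_perp[OF W] by blast
  then have "x + y \<in> ?P \<longleftrightarrow> x \<in> ?P" for x
    using vec.subspace_add[OF subspace_perp[of W], of "x + y" y] vec.subspace_add[OF subspace_perp[of W], of x y]
    by auto
  then show "(\<lambda>x. x + y) ` {x\<in>-?P. \<Theta> (x + y) = c} \<subseteq> {x\<in>-?P. \<Theta> x = c}"
    "(\<lambda>x. x + y) ` {x\<in>-?P. \<Theta> x = c} \<subseteq> {x\<in>-?P. \<Theta> (x + y) = c}"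
    by (simp_all add: image_subset_iff)
qed simp

lemma card_subspace_eq_card_translate_level:
  assumes W: "totally_singular W" and x: "x \<notin> perp W"
  shows "CARD('a) * card {y\<in>W. \<Theta> (x + y) = c} = card W"
proof -
  have "{y\<in>W. \<Theta> (x + y) = c} = {y\<in>W. f x y = c + \<Theta> x}"
  proof (intro Collect_cong conj_cong refl)
    fix y
    assume "y \<in> W"
    then have "\<Theta> (x + y) = \<Theta> x + f x y"
      using W unfolding totally_singular_def by (simp add: Theta_add)
    then show "\<Theta> (x + y) = c \<longleftrightarrow> f x y = c + \<Theta> x"
      by (metis add_add_self add.commute)
  qed
  moreover have "vec.subspace W"
    using W unfolding totally_singular_def by blast
  ultimately show ?thesis
    using card_subspace_eq_card_polar_fiber[OF _ x] by simp
qed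

lemma card_level_outside_perp:
  assumes W: "totally_singular W"
  shows "CARD('a) * card {x. x \<notin> perp W \<and> \<Theta> x = c} = CARD('a^'n) - card (perp W)"
proof -
  let ?P = "perp W" and ?N = "card {x\<in>-perp W. \<Theta> x = c}"
  \<comment> \<open>count the pairs (y, x) with y \<in> W, x \<notin> perp W and \<Theta> (x + y) = c in two ways\<close>
  have "card W * ?N = (\<Sum>y\<in>W. card {x\<in>-?P. \<Theta> (x + y) = c})"
    using card_outside_perp_translate[OF W] by simp
  also have "\<dots> = (\<Sum>x\<in>-?P. card {y\<in>W. \<Theta> (x + y) = c})"
    using sum_multicount_gen[of W "-?P" "\<lambda>y x. \<Theta> (x + y) = c" "\<lambda>x. card {y\<in>W. \<Theta> (x + y) = c}"]
    by simp
  finally have "card W * (CARD('a) * ?N) = card W * card (-?P)"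
    using card_subspace_eq_card_translate_level[OF W] by (simp add: sum_distrib_left mult_ac)
  moreover have "card W > 0"
    using W vec.subspace_0 unfolding totally_singular_def by (simp add: card_gt_0_iff) blast
  ultimately have "CARD('a) * ?N = card (-?P)"
    by auto
  moreover have "card (-?P) = CARD('a^'n) - card ?P"
    by (simp add: Compl_eq_Diff_UNIV card_Diff_subset)
  moreover have "{x\<in>-?P. \<Theta> x = c} = {x. x \<notin> ?P \<and> \<Theta> x = c}"
    by auto
  ultimately show ?thesis
    by simp
qed

lemma card_level_smult_invariant:
  assumes closed: "\<And>x s. x \<in> S \<Longrightarrow> s *s x \<in> S" and "c \<noteq> 0" "c' \<noteq> 0"
  shows "card {x\<in>S. \<Theta> x = c} = card {x\<in>S. \<Theta> x = c'}"
proof -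
  obtain s where s: "s^2 = c' / c"
    using ex_square_eq by blast
  with assms have "s \<noteq> 0"
    by auto
  have "bij_betw (\<lambda>x. s *s x) {x\<in>S. \<Theta> x = c} {x\<in>S. \<Theta> x = c'}"
  proof (rule bij_betw_byWitness[where f' = "\<lambda>x. (1 / s) *s x"])
    show "\<forall>x\<in>{x\<in>S. \<Theta> x = c}. (1 / s) *s (s *s x) = x"
      "\<forall>x\<in>{x\<in>S. \<Theta> x = c'}. s *s ((1 / s) *s x) = x"
      using \<open>s \<noteq> 0\<close> by (simp_all add: vector_smult_assoc)
    show "(\<lambda>x. s *s x) ` {x\<in>S. \<Theta> x = c} \<subseteq> {x\<in>S. \<Theta> x = c'}"
      using closed s \<open>c \<noteq> 0\<close> by (auto simp: Theta_smult)
    show "(\<lambda>x. (1 / s) *s x) ` {x\<in>S. \<Theta> x = c'} \<subseteq> {x\<in>S. \<Theta> x = c}"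
      using closed s \<open>s \<noteq> 0\<close> assms(2,3) by (auto simp: Theta_smult power_divide field_simps)
  qed
  then show ?thesis
    by (rule bij_betw_same_card)
qed

lemma card_level_split:
  assumes "totally_singular W"
  shows "CARD('a) * card {x. \<Theta> x = c}
    = CARD('a^'n) - card (perp W) + CARD('a) * card {x\<in>perp W. \<Theta> x = c}"
proof -
  have "{x. \<Theta> x = c} = {x. x \<notin> perp W \<and> \<Theta> x = c} \<union> {x\<in>perp W. \<Theta> x = c}"
    by auto
  then have "card {x. \<Theta> x = c} = card {x. x \<notin> perp W \<and> \<Theta> x = c} + card {x\<in>perp W. \<Theta> x = c}"
    by (simp add: card_Un_disjoint disjoint_iff)
  then show ?thesis
    using card_level_outside_perp[OF assms, of c] by (simp add: distrib_left)
qed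

lemma card_level_hyperbolic:
  assumes n: "CARD('n) = 2 * m" and witt: "witt_index \<Theta> = m" and c: "c \<noteq> 0"
  shows "CARD('a) * card {x. \<Theta> x = c} + CARD('a)^m = CARD('a)^(2*m)"
proof -
  let ?q = "CARD('a)"
  obtain W where W: "totally_singular W" "vec.dim W = m"
    using obtain_maximal_totally_singular witt by metis
  let ?P = "perp W"
  have card_W: "card W = ?q^m"
    using W card_subspace[of W] unfolding totally_singular_def by simp
  moreover have "card W * card ?P = ?q^m * ?q^m"
    using card_mult_card_perp[of W] W(1) n unfolding totally_singular_def by (simp flip: power_add mult_2)
  ultimately have card_P: "card ?P = ?q^m"
    by simp
  then have "W = ?P"
    using totally_singular_subset_perp[OF W(1)] card_W by (intro card_subset_eq) simp_all
  then have "{x\<in>?P. \<Theta> x = c} = {}"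
    using W(1) c unfolding totally_singular_def by auto
  moreover have "?q^m \<le> ?q^(2*m)"
    by (rule power_increasing) simp_all
  ultimately show ?thesis
    using card_level_split[OF W(1), of c] card_P n by simp
qed

lemma card_level_perp_maximal:
  assumes W: "totally_singular W"
    and maximal: "\<And>W'. totally_singular W' \<Longrightarrow> vec.dim W' \<le> vec.dim W"
    and c: "c \<noteq> 0"
  shows "card (perp W) + card {x\<in>perp W. \<Theta> x = c} = card W + CARD('a) * card {x\<in>perp W. \<Theta> x = c}"
proof -
  let ?P = "perp W" and ?K = "card {x\<in>perp W. \<Theta> x = c}" and ?q = "CARD('a)"
  have levels: "card {x\<in>?P. \<Theta> x = e} = ?K" if "e \<noteq> 0" for e
    using card_level_smult_invariant[OF _ that c] vec.subspace_scale[OF subspace_perp] by blast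
  have "card ?P = (\<Sum>e\<in>UNIV. card {x\<in>?P. \<Theta> x = e})"
    by (rule card_eq_sum_card_fibers) simp
  also have "\<dots> = card {x\<in>?P. \<Theta> x = 0} + (\<Sum>e\<in>UNIV - {0}. card {x\<in>?P. \<Theta> x = e})"
    by (simp add: sum.remove)
  also have "\<dots> = card W + (?q - 1) * ?K"
    using singular_perp_eq_maximal_totally_singular[OF W maximal] levels
    by (simp add: card_Diff_singleton)
  finally have "card ?P = card W + (?q - 1) * ?K" .
  moreover have "(?q - 1) * ?K + ?K = ?q * ?K"
    using card_field_gt_1[where 'a = 'a] by (cases ?q) simp_all
  ultimately show ?thesis
    by simp
qed

lemma card_level_elliptic:
  assumes n: "CARD('n) = 2 * m" and witt: "witt_index \<Theta> + 1 = m" and c: "c \<noteq> 0"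
  shows "CARD('a) * card {x. \<Theta> x = c} = CARD('a)^(2*m) + CARD('a)^m"
proof -
  let ?q = "CARD('a)" and ?k = "witt_index \<Theta>"
  obtain W where W: "totally_singular W" "vec.dim W = ?k"
    and maximal: "\<And>W'. totally_singular W' \<Longrightarrow> vec.dim W' \<le> vec.dim W"
    using obtain_maximal_totally_singular by metis
  let ?P = "perp W" and ?K = "card {x\<in>perp W. \<Theta> x = c}"
  have card_W: "card W = ?q^?k"
    using W card_subspace[of W] unfolding totally_singular_def by simp
  moreover have "card W * card ?P = ?q^(2 * m)"
    using card_mult_card_perp[of W] W(1) n unfolding totally_singular_def by simp
  moreover have "2 * m = ?k + (?k + 2)"
    using witt by simp
  ultimately have "?q^?k * card ?P = ?q^?k * ?q^(?k + 2)"
    by (simp only: power_add)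
  then have card_P: "card ?P = ?q^(?k + 2)"
    by simp
  have "?q^(?k + 2) + ?K = ?q^?k + ?q * ?K"
    using card_level_perp_maximal[OF W(1) maximal c] card_P card_W by simp
  then have "int (?q^(?k + 2) + ?K) = int (?q^?k + ?q * ?K)"
    by (rule arg_cong)
  then have "int ?q^(?k + 2) + int ?K = int ?q^?k + int ?q * int ?K"
    by (simp only: of_nat_add of_nat_mult of_nat_power)
  then have "(int ?q - 1) * int ?K = (int ?q - 1) * (int ?q^?k * (int ?q + 1))"
    by (simp add: algebra_simps power_add power2_eq_square)
  then have K: "int ?K = int ?q^?k * (int ?q + 1)"
    using card_field_gt_1[where 'a = 'a] by simp
  have "card ?P \<le> CARD('a^'n)"
    by (rule card_mono) simp_all
  then have "int (?q * card {x. \<Theta> x = c}) = int CARD('a^'n) - int (card ?P) + int ?q * int ?K"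
    using card_level_split[OF W(1), of c] by (simp only: of_nat_add of_nat_mult of_nat_diff)
  also have "\<dots> = int (?q^(2 * m) + ?q^m)"
    using card_P K n witt[symmetric] by (simp add: algebra_simps power_add power2_eq_square)
  finally show ?thesis
    by (simp only: of_nat_eq_iff)
qed

lemma card_polar_level_translate:
  "card {b. f a b = d \<and> \<Theta> b = e} = card {b. f a b = d \<and> \<Theta> b = e + (s^2 * \<Theta> a + s * d)}"
proof (rule card_eq_if_involution[of "\<lambda>b. b + s *s a"])
  have shift: "f a (b + s *s a) = d" "\<Theta> (b + s *s a) = \<Theta> b + (s^2 * \<Theta> a + s * d)"
    if "f a b = d" for b
    using that by (simp_all add: Theta_add Theta_smult polar_commute[of b a] add.assoc)
  show "(\<lambda>b. b + s *s a) ` {b. f a b = d \<and> \<Theta> b = e}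
    \<subseteq> {b. f a b = d \<and> \<Theta> b = e + (s^2 * \<Theta> a + s * d)}"
    "(\<lambda>b. b + s *s a) ` {b. f a b = d \<and> \<Theta> b = e + (s^2 * \<Theta> a + s * d)}
    \<subseteq> {b. f a b = d \<and> \<Theta> b = e}"
    using shift by (simp_all add: image_subset_iff)
qed simp

lemma card_polar_level_smult:
  assumes "s \<noteq> 0"
  shows "card {b. f a b = d \<and> \<Theta> b = e} = card {b. f a b = s * d \<and> \<Theta> b = s^2 * e}"
proof (rule bij_betw_same_card, rule bij_betw_byWitness[where f' = "\<lambda>b. (1 / s) *s b"])
  show "\<forall>b\<in>{b. f a b = d \<and> \<Theta> b = e}. (1 / s) *s (s *s b) = b"
    "\<forall>b\<in>{b. f a b = s * d \<and> \<Theta> b = s^2 * e}. s *s ((1 / s) *s b) = b"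
    using assms by (simp_all add: vector_smult_assoc)
  show "(\<lambda>b. s *s b) ` {b. f a b = d \<and> \<Theta> b = e} \<subseteq> {b. f a b = s * d \<and> \<Theta> b = s^2 * e}"
    by (auto simp: Theta_smult)
  show "(\<lambda>b. (1 / s) *s b) ` {b. f a b = s * d \<and> \<Theta> b = s^2 * e} \<subseteq> {b. f a b = d \<and> \<Theta> b = e}"
    using assms by (auto simp: Theta_smult power_divide)
qed

lemma card_hyperplane_level:
  assumes "\<Theta> a \<noteq> 0"
  shows "CARD('a)^2 * card {b. f a b = 0 \<and> \<Theta> b = e} = CARD('a^'n)"
proof -
  have levels: "card {b. f a b = 0 \<and> \<Theta> b = e'} = card {b. f a b = 0 \<and> \<Theta> b = e}" for e'
  proof -
    obtain s where "s^2 = (e + e') / \<Theta> a"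
      using ex_square_eq by blast
    then have "e' + (s^2 * \<Theta> a + s * 0) = e"
      using assms by (simp add: add.commute char2)
    then show ?thesis
      using card_polar_level_translate[of a 0 e' s] by simp
  qed
  have "card {b. f a b = 0} = (\<Sum>e'\<in>UNIV. card {b. f a b = 0 \<and> \<Theta> b = e'})"
    using card_eq_sum_card_fibers[of "{b. f a b = 0}" \<Theta>] by simp
  also have "\<dots> = (\<Sum>e'\<in>(UNIV::'a set). card {b. f a b = 0 \<and> \<Theta> b = e})"
    using levels by (rule sum.cong[OF refl])
  finally have "card {b. f a b = 0} = CARD('a) * card {b. f a b = 0 \<and> \<Theta> b = e}"
    by simp
  moreover have "a \<noteq> 0"
    using assms by auto
  then have "CARD('a^'n) = CARD('a) * card {b. f a b = 0}"
    using card_subspace_eq_card_polar_fiber[of UNIV a 0] notin_perp_UNIV by simp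
  ultimately show ?thesis
    by (simp add: power2_eq_square)
qed

lemma tr4_eq_0_iff: "tr4 (y::'a) = 0 \<longleftrightarrow> y = 0 \<or> y = 1"
proof -
  have "tr4 y = y * (y + 1)"
    unfolding tr4_def by (simp add: power2_eq_square algebra_simps)
  moreover have "y + 1 = 0 \<longleftrightarrow> y = 1"
    by (rule add_eq_0_iff_eq)
  ultimately show ?thesis
    by simp
qed

lemma cube_root_neq:
  assumes "c^2 + c + 1 = (0::'a)"
  shows "c \<noteq> 0" "c \<noteq> 1" "c + 1 \<noteq> 0" "c + 1 \<noteq> 1"
proof -
  show "c \<noteq> 0"
    using assms by auto
  have "(1::'a)^2 + 1 + 1 = 1"
    by (simp only: power_one add_add_self)
  then show "c \<noteq> 1"
    using assms by auto
  then show "c + 1 \<noteq> 0"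
    by (simp add: add_eq_0_iff_eq)
  show "c + 1 \<noteq> 1"
    using \<open>c \<noteq> 0\<close> by simp
qed

lemma cube_root_add_1:
  assumes "c^2 + c + 1 = (0::'a)"
  shows "(c + 1)^2 + (c + 1) + 1 = 0"
  using assms by (simp add: square_add ac_simps)

lemma tr4_cube_root:
  assumes "c^2 + c + 1 = (0::'a)"
  shows "tr4 c = 1"
proof -
  have "c^2 = c + 1"
    using assms by (simp add: add_eq_0_iff_eq add.assoc)
  then show ?thesis
    unfolding tr4_def by (simp flip: add.assoc)
qed

lemma UNIV_F4:
  assumes "CARD('a) = 4" and "c^2 + c + 1 = (0::'a)"
  shows "UNIV = {0, 1, c, c + 1}"
proof -
  have "card {0, 1, c, c + 1} = 4"
    using cube_root_neq[OF assms(2)] by auto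
  then show ?thesis
    using assms(1) by (metis card_subset_eq finite subset_UNIV)
qed

lemma sum_UNIV_F4:
  assumes "CARD('a) = 4" and "c^2 + c + 1 = (0::'a)"
  shows "(\<Sum>x\<in>UNIV. g x) = g 0 + g 1 + g c + g (c + 1)"
  using cube_root_neq[OF assms(2)] unfolding UNIV_F4[OF assms] by (simp add: ac_simps)

lemma tr4_eq_1_iff_F4:
  assumes "CARD('a) = 4" and "c^2 + c + 1 = (0::'a)"
  shows "tr4 y = 1 \<longleftrightarrow> y = c \<or> y = c + 1"
proof -
  have "tr4 c = 1" "tr4 (c + 1) = 1"
    using tr4_cube_root assms(2) cube_root_add_1[OF assms(2)] by blast+
  then show ?thesis
    using UNIV_F4[OF assms] tr4_eq_0_iff[of y] by auto
qed

lemma tr4_F4_cases: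
  assumes "CARD('a) = 4" and "c^2 + c + 1 = (0::'a)"
  shows "tr4 (y::'a) = 0 \<or> tr4 y = 1"
  using UNIV_F4[OF assms] tr4_eq_0_iff[of y] tr4_eq_1_iff_F4[OF assms, of y] by auto

lemma card_UNIV_eq_card_levels_F4:
  assumes F4: "CARD('a) = 4" and root: "c^2 + c + 1 = 0"
  shows "CARD('a^'n) = card {x. \<Theta> x = 0} + 3 * card {x. \<Theta> x = c}"
proof -
  have levels: "card {x. \<Theta> x = e} = card {x. \<Theta> x = c}" if "e \<noteq> 0" for e
    using card_level_smult_invariant[of UNIV e c] that cube_root_neq[OF root] by simp
  have "CARD('a^'n) = card {x. \<Theta> x = 0} + card {x. \<Theta> x = 1} + card {x. \<Theta> x = c}
    + card {x. \<Theta> x = c + 1}"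
    using card_eq_sum_card_fibers[of "UNIV :: ('a^'n) set" \<Theta>] sum_UNIV_F4[OF F4 root] by simp
  then show ?thesis
    using levels[of 1] levels[of "c + 1"] cube_root_neq[OF root] by simp
qed

lemma card_neighbours_in_level_F4:
  assumes F4: "CARD('a) = 4" and root: "c^2 + c + 1 = 0" and a: "\<Theta> a = c"
  shows "8 * card {b\<in>{x. \<Theta> x = c}. a \<noteq> b \<and> tr4 (f a b) = 0} + CARD('a^'n) + 8
    = 8 * card {x. \<Theta> x = c}"
proof -
  define M where "M d e = card {b. f a b = d \<and> \<Theta> b = e}" for d e
  let ?V = "CARD('a^'n)"
  note neq = cube_root_neq[OF root]
  have sum4: "(\<Sum>e\<in>UNIV. g e) = g 0 + g 1 + g c + g (c + 1)" for g :: "'a \<Rightarrow> nat"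
    by (rule sum_UNIV_F4[OF F4 root])
  have a0: "a \<noteq> 0"
    using a neq by auto
  have hyperplane: "16 * M 0 e = ?V" for e
    using card_hyperplane_level[of a e] a neq F4 unfolding M_def by simp
  have "?V = 4 * card {b. f a b = 1}"
    using card_subspace_eq_card_polar_fiber[of UNIV a 1] notin_perp_UNIV[OF a0] F4 by simp
  also have "card {b. f a b = 1} = M 1 0 + M 1 1 + M 1 c + M 1 (c + 1)"
    using card_eq_sum_card_fibers[of "{b. f a b = 1}" \<Theta>] sum4 unfolding M_def by simp
  finally have polar_1: "?V = 4 * (M 1 0 + M 1 1 + M 1 c + M 1 (c + 1))" .
  have "1 + (c + 1) = c"
    by (metis add.commute add_add_self)
  then have translate: "M 1 0 = M 1 (c + 1)" "M 1 1 = M 1 c"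
    using card_polar_level_translate[of a 1 0 1] card_polar_level_translate[of a 1 1 1] a
    unfolding M_def by simp_all
  have M_smult: "M d 0 = M 1 0" if "d \<noteq> 0" for d
    using card_polar_level_smult[OF that, of a 1 0] unfolding M_def by simp
  have "card {x. \<Theta> x = 0} = M 0 0 + M 1 0 + M c 0 + M (c + 1) 0"
    using card_eq_sum_card_fibers[of "{x. \<Theta> x = 0}" "f a"] sum4
    unfolding M_def by (simp add: conj_commute)
  then have zero_level: "card {x. \<Theta> x = 0} = M 0 0 + 3 * M 1 0"
    using M_smult[of c] M_smult[of "c + 1"] neq by simp
  let ?S = "{b. f a b = 0 \<and> \<Theta> b = c} \<union> {b. f a b = 1 \<and> \<Theta> b = c}"
  have "{b\<in>{x. \<Theta> x = c}. a \<noteq> b \<and> tr4 (f a b) = 0} = ?S - {a}"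
    by (auto simp: tr4_eq_0_iff)
  moreover have "card ?S = Suc (card (?S - {a}))"
    using a by (intro card.remove) simp_all
  moreover have "card ?S = M 0 c + M 1 c"
    unfolding M_def by (rule card_Un_disjoint) auto
  ultimately have degree: "card {b\<in>{x. \<Theta> x = c}. a \<noteq> b \<and> tr4 (f a b) = 0} + 1 = M 0 c + M 1 c"
    by simp
  show ?thesis
    using hyperplane[of 0] hyperplane[of c] polar_1 translate zero_level degree
      card_UNIV_eq_card_levels_F4[OF F4 root] by simp
qed

lemma card_level_F4:
  fixes m :: nat and \<epsilon> :: int
  assumes F4: "CARD('a) = 4" and n: "CARD('n) = 2 * m" and m: "m \<ge> 1"
    and eps: "\<epsilon> = 1 \<or> \<epsilon> = -1" and witt: "witt_index \<Theta> = (if \<epsilon> = 1 then m else m - 1)"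
    and c: "c \<noteq> 0"
  shows "int (card {x. \<Theta> x = c}) = 2^(4*m-2) - \<epsilon> * 2^(2*m-2)"
proof -
  have pow2: "(2::int)^k = 2^j * 2^(k - j)" if "j \<le> k" for j k
    using that by (simp flip: power_add)
  have "(4::int)^(2*m) = 4 * 2^(4*m-2)" "(4::int)^m = 4 * 2^(2*m-2)"
    using pow2[of 2 "4*m"] pow2[of 2 "2*m"] m by (simp_all add: power_mult)
  moreover have "int (4 * card {x. \<Theta> x = c}) = 4^(2*m) - \<epsilon> * 4^m"
  proof (cases "\<epsilon> = 1")
    case True
    then have "4 * card {x. \<Theta> x = c} + 4^m = 4^(2*m)"
      using card_level_hyperbolic[OF n _ c] witt F4 by simp
    then have "int (4 * card {x. \<Theta> x = c} + 4^m) = int (4^(2*m))"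
      by (rule arg_cong)
    then show ?thesis
      using True by simp
  next
    case False
    then have "4 * card {x. \<Theta> x = c} = 4^(2*m) + 4^m"
      using card_level_elliptic[OF n _ c] witt F4 m by simp
    then show ?thesis
      using False eps by simp
  qed
  ultimately show ?thesis
    by simp
qed

lemma card_neighbours_F4:
  fixes m :: nat and \<epsilon> :: int
  assumes F4: "CARD('a) = 4" and n: "CARD('n) = 2 * m" and m: "m \<ge> 1"
    and eps: "\<epsilon> = 1 \<or> \<epsilon> = -1" and witt: "witt_index \<Theta> = (if \<epsilon> = 1 then m else m - 1)"
    and root: "c^2 + c + 1 = 0" and a: "\<Theta> a = c"
  shows "int (card {b\<in>{x. \<Theta> x = c}. a \<noteq> b \<and> tr4 (f a b) = 0}) = 2^(4*m-3) - \<epsilon> * 2^(2*m-2) - 1"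
proof -
  have pow2: "(2::int)^k = 2^j * 2^(k - j)" if "j \<le> k" for j k
    using that by (simp flip: power_add)
  have "(2::int)^(4*m-2) = 2 * 2^(4*m-3)"
    using pow2[of 1 "4*m-2"] m by simp
  moreover have "int CARD('a^'n) = 2^(4*m)"
    using F4 n by (simp add: power_mult)
  moreover have "(2::int)^(4*m) = 8 * 2^(4*m-3)"
    using pow2[of 3 "4*m"] m by simp
  moreover have "8 * int (card {b\<in>{x. \<Theta> x = c}. a \<noteq> b \<and> tr4 (f a b) = 0}) + int CARD('a^'n) + 8
    = 8 * int (card {x. \<Theta> x = c})"
    using arg_cong[where f = int, OF card_neighbours_in_level_F4[OF F4 root a]]
    by (simp only: of_nat_add of_nat_mult of_nat_numeral)
  ultimately show ?thesis
    using card_level_F4[OF F4 n m eps witt cube_root_neq(1)[OF root]] by linarith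
qed

lemma polar_square_adjacency_eq_seidel_switch:
  assumes F4: "CARD('a) = 4" and root: "c^2 + c + 1 = 0"
    and a: "tr4 (\<Theta> a) = 1" and b: "tr4 (\<Theta> b) = 1"
  shows "(a \<noteq> b \<and> \<Theta> (a + b) = (f a b)^2)
    \<longleftrightarrow> seidel_switch (\<lambda>a b. a \<noteq> b \<and> tr4 (f a b) = 0) {x. \<Theta> x = c} a b"
proof -
  have "c + (c + 1) = 1"
    by (simp flip: add.assoc)
  moreover have "c + 1 + c = 1"
    using calculation by (metis add.commute)
  moreover have "c \<noteq> c + 1"
    by simp
  moreover have "\<Theta> a = c \<or> \<Theta> a = c + 1" "\<Theta> b = c \<or> \<Theta> b = c + 1"
    using a b tr4_eq_1_iff_F4[OF F4 root] by blast+
  ultimately have "\<Theta> a + \<Theta> b = (if (\<Theta> a = c) \<noteq> (\<Theta> b = c) then 1 else 0)"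
    by auto
  then show ?thesis
    using tr4_F4_cases[OF F4 root, of "f a b"]
    unfolding Theta_add_eq_polar_square_iff seidel_switch_def by auto
qed

end

theorem proposition4p8:
  fixes \<Theta> :: "'a::{field,finite}^'n \<Rightarrow> 'a"
    and m :: nat and \<epsilon> :: int and \<omega> :: 'a
    and X A B :: "('a^'n) set"
    and G1 G2 :: "'a^'n \<Rightarrow> 'a^'n \<Rightarrow> bool"
  assumes F4: "CARD('a) = 4"
    and dim: "CARD('n) = 2 * m"
    and m: "m \<ge> 1"
    and qf: "quadratic_form \<Theta>"
    and nd: "nondegenerate \<Theta>"
    and eps: "\<epsilon> = 1 \<or> \<epsilon> = -1"
    and wtype: "witt_index \<Theta> = (if \<epsilon> = 1 then m else m - 1)"
    and X_def: "X = {a. tr4 (\<Theta> a) = 1}"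
    and G1_def: "\<And>a b. G1 a b \<longleftrightarrow> a \<noteq> b \<and> tr4 (polar \<Theta> a b) = 0"
    and G2_def: "\<And>a b. G2 a b \<longleftrightarrow> a \<noteq> b \<and> \<Theta> (a + b) = (polar \<Theta> a b)^2"
    and lam_root: "\<omega>^2 + \<omega> + 1 = 0"
    and A_def: "A = {a. \<Theta> a = \<omega>}"
    and B_def: "B = {a. \<Theta> a = \<omega> + 1}"
  shows "X = A \<union> B
    \<and> (\<forall>a\<in>X. \<forall>b\<in>X. G2 a b \<longleftrightarrow> seidel_switch G1 A a b)
    \<and> (\<forall>a\<in>X. \<forall>b\<in>X. G2 a b \<longleftrightarrow> seidel_switch G1 B a b)
    \<and> int (card A) = 2^(4*m-2) - \<epsilon> * 2^(2*m-2)
    \<and> int (card B) = 2^(4*m-2) - \<epsilon> * 2^(2*m-2)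
    \<and> (\<forall>a\<in>A. int (card {b\<in>A. G1 a b}) = 2^(4*m-3) - \<epsilon> * 2^(2*m-2) - 1)
    \<and> (\<forall>a\<in>B. int (card {b\<in>B. G1 a b}) = 2^(4*m-3) - \<epsilon> * 2^(2*m-2) - 1)
    \<and> (\<forall>a\<in>A. int (card {b\<in>A. G2 a b}) = 2^(4*m-3) - \<epsilon> * 2^(2*m-2) - 1)
    \<and> (\<forall>a\<in>B. int (card {b\<in>B. G2 a b}) = 2^(4*m-3) - \<epsilon> * 2^(2*m-2) - 1)"
proof -
  interpret char2_quadratic_space \<Theta>
    using char_2_if_card_4[OF F4] qf nd by unfold_locales
  note root_B = cube_root_add_1[OF lam_root] and neq = cube_root_neq[OF lam_root]
  have G1_eq: "G1 = (\<lambda>a b. a \<noteq> b \<and> tr4 (polar \<Theta> a b) = 0)"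
    using G1_def by blast
  have X_eq: "X = A \<union> B"
    using tr4_eq_1_iff_F4[OF F4 lam_root] unfolding X_def A_def B_def by blast
  have switch_A: "\<forall>a\<in>X. \<forall>b\<in>X. G2 a b \<longleftrightarrow> seidel_switch G1 A a b"
    using polar_square_adjacency_eq_seidel_switch[OF F4 lam_root]
    unfolding X_def A_def G1_eq G2_def by blast
  have "A \<inter> B = {}"
    unfolding A_def B_def by auto
  have switch_B: "\<forall>a\<in>X. \<forall>b\<in>X. G2 a b \<longleftrightarrow> seidel_switch G1 B a b"
    using switch_A seidel_switch_complement[OF _ _ \<open>A \<inter> B = {}\<close>] X_eq by blast
  have G1_degree_A: "int (card {b\<in>A. G1 a b}) = 2^(4*m-3) - \<epsilon> * 2^(2*m-2) - 1" if "a \<in> A" for a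
    using card_neighbours_F4[OF F4 dim m eps wtype lam_root, of a] that unfolding A_def G1_eq by simp
  have G1_degree_B: "int (card {b\<in>B. G1 a b}) = 2^(4*m-3) - \<epsilon> * 2^(2*m-2) - 1" if "a \<in> B" for a
    using card_neighbours_F4[OF F4 dim m eps wtype root_B, of a] that unfolding B_def G1_eq by simp
  have G2_degree_A: "int (card {b\<in>A. G2 a b}) = 2^(4*m-3) - \<epsilon> * 2^(2*m-2) - 1" if "a \<in> A" for a
    using seidel_switch_within[OF _ switch_A that] G1_degree_A[OF that] X_eq by simp
  have G2_degree_B: "int (card {b\<in>B. G2 a b}) = 2^(4*m-3) - \<epsilon> * 2^(2*m-2) - 1" if "a \<in> B" for a
    using seidel_switch_within[OF _ switch_B that] G1_degree_B[OF that] X_eq by simp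
  have card_A: "int (card A) = 2^(4*m-2) - \<epsilon> * 2^(2*m-2)"
    and card_B: "int (card B) = 2^(4*m-2) - \<epsilon> * 2^(2*m-2)"
    unfolding A_def B_def using card_level_F4[OF F4 dim m eps wtype] neq by simp_all
  show ?thesis
    by (intro conjI X_eq switch_A switch_B card_A card_B ballI G1_degree_A G1_degree_B G2_degree_A G2_degree_B)
qed

end
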